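(* Let $X$ be a Tychonoff space containing a countably infinite subset $N$ such that (1) $N$ is not nowhere dense in $X$; (2) $X\setminus N$ is dense in $X$; (3) each singleton subset of $N$ is a zero set in $X$. Then $T''(X)$ is not closed under uniform limits (there is a sequence in $T''(X)$ converging uniformly on $X$ to a function not in $T''(X)$), and hence $T''(X)$ is not ring-isomorphic to $C(Y)$ for any topological space $Y$.
   Context: $C(X)$ is the ring of real-valued continuous functions on $X$. A zero set is a set $Z(g)=\{x: g(x)=0\}$ with $g\in C(X)$, and a cozero set is its complement $coz(g)$. $T''(X)$ is the ring (under pointwise operations) of all functions $f\colon X\to\mathbb{R}$ for which there is a dense cozero set $U$ of $X$ with $f|_U$ continuous. *)

theory Defs
  imports "HOL-Analysis.Analysis"
begin

definition tychonoff_space :: "'a topology \<Rightarrow> bool" where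
  "tychonoff_space X \<longleftrightarrow> completely_regular_space X \<and> Hausdorff_space X"

definition zero_set :: "'a topology \<Rightarrow> ('a \<Rightarrow> real) \<Rightarrow> 'a set" where
  "zero_set X g = {x \<in> topspace X. g x = 0}"

definition is_zero_set :: "'a topology \<Rightarrow> 'a set \<Rightarrow> bool" where
  "is_zero_set X Z \<longleftrightarrow> (\<exists>g. continuous_map X euclideanreal g \<and> Z = zero_set X g)"

definition is_cozero_set :: "'a topology \<Rightarrow> 'a set \<Rightarrow> bool" where
  "is_cozero_set X U \<longleftrightarrow>
     (\<exists>g. continuous_map X euclideanreal g \<and> U = topspace X - zero_set X g)"

definition dense_in :: "'a topology \<Rightarrow> 'a set \<Rightarrow> bool" where
  "dense_in X S \<longleftrightarrow> X closure_of S = topspace X"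

definition nowhere_dense_in :: "'a topology \<Rightarrow> 'a set \<Rightarrow> bool" where
  "nowhere_dense_in X S \<longleftrightarrow> X interior_of (X closure_of S) = {}"

text \<open>f : X \<rightarrow> R belongs to T''(X): continuous on some dense cozero set
  (only the values on topspace X matter).\<close>
definition in_T2 :: "'a topology \<Rightarrow> ('a \<Rightarrow> real) \<Rightarrow> bool" where
  "in_T2 X f \<longleftrightarrow> (\<exists>U. is_cozero_set X U \<and> dense_in X U \<and>
                        continuous_map (subtopology X U) euclideanreal f)"

text \<open>Rings of functions on X, represented extensionally (value 0 off topspace X),
  with pointwise operations.\<close>
definition T2_ring :: "'a topology \<Rightarrow> ('a \<Rightarrow> real) set" where
  "T2_ring X = {f. in_T2 X f \<and> (\<forall>x. x \<notin> topspace X \<longrightarrow> f x = 0)}"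

definition C_ring :: "'a topology \<Rightarrow> ('a \<Rightarrow> real) set" where
  "C_ring X = {f. continuous_map X euclideanreal f \<and> (\<forall>x. x \<notin> topspace X \<longrightarrow> f x = 0)}"

definition ring_isomorphic :: "('a \<Rightarrow> real) set \<Rightarrow> ('b \<Rightarrow> real) set \<Rightarrow> bool" where
  "ring_isomorphic A B \<longleftrightarrow> (\<exists>\<phi>. bij_betw \<phi> A B \<and>
     (\<forall>f\<in>A. \<forall>g\<in>A. \<phi> (\<lambda>x. f x + g x) = (\<lambda>y. \<phi> f y + \<phi> g y) \<and>
                    \<phi> (\<lambda>x. f x * g x) = (\<lambda>y. \<phi> f y * \<phi> g y)))"

end

theory Submission
  imports Defs
begin

text \<open>Let f be 1/(n+1) at the n-th point of N and 0 elsewhere. Its truncations to the first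
  k points of N lie in T''(X): they vanish off a finite zero set whose complement, containing
  X - N, is a dense cozero set. They converge uniformly to f, but f is not in T''(X): a dense
  open set U on which f is continuous meets the interior of the closure of N, hence meets N,
  and around such a point the open set {f \<noteq> 0} \<inter> U lies inside N, contradicting the density
  of X - N.

  For the second claim, in both T''(X) and C(Y) the nonnegative functions are exactly the
  squares, so a ring isomorphism preserves the order and, fixing the unit, the constants
  1/(m+1). Hence it preserves uniform bounds, uniform convergence and uniform Cauchy
  sequences, and would carry the uniform completeness of C(Y) over to T''(X).\<close>

lemma is_zero_set_empty: "is_zero_set X {}"
  unfolding is_zero_set_def zero_set_def by (rule exI[of _ "\<lambda>x. 1"]) auto

lemma is_zero_set_Un:
  assumes "is_zero_set X A" "is_zero_set X B"
  shows "is_zero_set X (A \<union> B)"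
proof -
  obtain f g where "continuous_map X euclideanreal f" "A = zero_set X f"
    and "continuous_map X euclideanreal g" "B = zero_set X g"
    using assms unfolding is_zero_set_def by blast
  then show ?thesis
    unfolding is_zero_set_def
    by (intro exI[of _ "\<lambda>x. f x * g x"]) (auto simp: zero_set_def continuous_map_real_mult)
qed

lemma is_zero_set_finite:
  assumes "finite F" "\<And>x. x \<in> F \<Longrightarrow> is_zero_set X {x}"
  shows "is_zero_set X F"
  using assms
proof (induction F rule: finite_induct)
  case empty
  show ?case by (rule is_zero_set_empty)
next
  case (insert x F)
  then show ?case
    using is_zero_set_Un[of X "{x}" F] by simp
qed

lemma is_cozero_set_iff: "is_cozero_set X U \<longleftrightarrow> (\<exists>Z. is_zero_set X Z \<and> U = topspace X - Z)"
  by (auto simp: is_cozero_set_def is_zero_set_def)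

lemma is_cozero_set_topspace: "is_cozero_set X (topspace X)"
  using is_zero_set_empty by (auto simp: is_cozero_set_iff)

lemma is_cozero_set_Int:
  assumes "is_cozero_set X U" "is_cozero_set X V"
  shows "is_cozero_set X (U \<inter> V)"
  using assms is_zero_set_Un unfolding is_cozero_set_iff by (metis Diff_Un)

lemma openin_cozero_set:
  assumes "is_cozero_set X U"
  shows "openin X U"
proof -
  obtain g where g: "continuous_map X euclideanreal g" "U = topspace X - zero_set X g"
    using assms unfolding is_cozero_set_def by blast
  have "openin X {x \<in> topspace X. g x \<in> - {0}}"
    by (rule openin_continuous_map_preimage[OF g(1)]) auto
  moreover have "U = {x \<in> topspace X. g x \<in> - {0}}"
    using g(2) by (auto simp: zero_set_def)
  ultimately show ?thesis
    by simp
qed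

lemma dense_in_Int_openin:
  assumes "dense_in X U" "openin X U" "dense_in X V"
  shows "dense_in X (U \<inter> V)"
  unfolding dense_in_def dense_intersects_open
proof (intro allI impI)
  fix W assume W: "openin X W \<and> W \<noteq> {}"
  then have "U \<inter> W \<noteq> {}"
    using assms(1) by (simp add: dense_in_def dense_intersects_open)
  moreover have "openin X (U \<inter> W)"
    using W assms(2) by blast
  ultimately have "V \<inter> (U \<inter> W) \<noteq> {}"
    using assms(3) by (simp add: dense_in_def dense_intersects_open)
  then show "U \<inter> V \<inter> W \<noteq> {}"
    by blast
qed

lemma dense_in_mono:
  assumes "dense_in X S" "S \<subseteq> S'" "S' \<subseteq> topspace X"
  shows "dense_in X S'"
  using assms closure_of_mono[OF assms(2)] closure_of_subset_topspace[of X S']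
  unfolding dense_in_def by blast

lemma in_T2_cong:
  assumes "in_T2 X f" "\<And>x. x \<in> topspace X \<Longrightarrow> f x = g x"
  shows "in_T2 X g"
  using assms unfolding in_T2_def by (metis continuous_map_eq topspace_subtopology IntE)

lemma in_T2_continuous_map: "continuous_map X euclideanreal f \<Longrightarrow> in_T2 X f"
  unfolding in_T2_def dense_in_def
  using is_cozero_set_topspace[of X] by auto

lemma in_T2_compose:
  assumes "in_T2 X f" "continuous_on UNIV h"
  shows "in_T2 X (\<lambda>x. h (f x))"
proof -
  obtain U where U: "is_cozero_set X U" "dense_in X U" "continuous_map (subtopology X U) euclideanreal f"
    using assms(1) unfolding in_T2_def by blast
  have "continuous_map euclideanreal euclideanreal h"
    using assms(2) by simp
  then have "continuous_map (subtopology X U) euclideanreal (h \<circ> f)"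
    by (rule continuous_map_compose[OF U(3)])
  then show ?thesis
    using U unfolding in_T2_def by (auto simp: o_def)
qed

lemma in_T2_compose2:
  assumes "in_T2 X f" "in_T2 X g" "continuous_on UNIV (\<lambda>p :: real \<times> real. h (fst p) (snd p))"
  shows "in_T2 X (\<lambda>x. h (f x) (g x))"
proof -
  obtain U where U: "is_cozero_set X U" "dense_in X U" "continuous_map (subtopology X U) euclideanreal f"
    using assms(1) unfolding in_T2_def by blast
  obtain V where V: "is_cozero_set X V" "dense_in X V" "continuous_map (subtopology X V) euclideanreal g"
    using assms(2) unfolding in_T2_def by blast
  have pair: "continuous_map (subtopology X (U \<inter> V)) (prod_topology euclideanreal euclideanreal) (\<lambda>x. (f x, g x))"
    using U(3) V(3) by (intro continuous_map_pairedI) (auto intro: continuous_map_from_subtopology_mono)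
  have "continuous_map (prod_topology euclideanreal euclideanreal) euclideanreal (\<lambda>p :: real \<times> real. h (fst p) (snd p))"
    using assms(3) by (simp add: euclidean_product_topology)
  from continuous_map_compose[OF pair this]
  have "continuous_map (subtopology X (U \<inter> V)) euclideanreal (\<lambda>x. h (f x) (g x))"
    by (simp add: o_def)
  moreover have "is_cozero_set X (U \<inter> V)"
    using U(1) V(1) by (rule is_cozero_set_Int)
  moreover have "dense_in X (U \<inter> V)"
    using U(2) openin_cozero_set[OF U(1)] V(2) by (rule dense_in_Int_openin)
  ultimately show ?thesis
    unfolding in_T2_def by blast
qed

lemma in_T2_if_vanishes_off_finite:
  assumes "finite F" "\<And>x. x \<in> F \<Longrightarrow> is_zero_set X {x}" "dense_in X (topspace X - F)"
    and "\<And>x. x \<in> topspace X - F \<Longrightarrow> f x = 0"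
  shows "in_T2 X f"
proof -
  have "is_cozero_set X (topspace X - F)"
    using is_zero_set_finite[OF assms(1,2)] by (auto simp: is_cozero_set_iff)
  moreover have "continuous_map (subtopology X (topspace X - F)) euclideanreal f"
    by (rule continuous_map_eq[of _ _ "\<lambda>x. 0"]) (use assms(4) in auto)
  ultimately show ?thesis
    using assms(3) unfolding in_T2_def by blast
qed

lemma not_in_T2_if_nonzero_exactly_on:
  assumes "\<not> nowhere_dense_in X N" "dense_in X (topspace X - N)"
    and "\<And>x. x \<in> topspace X \<Longrightarrow> f x \<noteq> 0 \<longleftrightarrow> x \<in> N"
  shows "\<not> in_T2 X f"
proof
  assume "in_T2 X f"
  then obtain U where U: "is_cozero_set X U" "dense_in X U" "continuous_map (subtopology X U) euclideanreal f"
    unfolding in_T2_def by blast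
  have "openin X U"
    using U(1) by (rule openin_cozero_set)
  define W where "W = X interior_of (X closure_of N)"
  have "openin X W" "W \<noteq> {}"
    using assms(1) by (auto simp: W_def nowhere_dense_in_def)
  then have "U \<inter> W \<noteq> {}"
    using U(2) by (auto simp: dense_in_def dense_intersects_open)
  moreover have "openin X (U \<inter> W)"
    using \<open>openin X U\<close> \<open>openin X W\<close> by blast
  moreover have "U \<inter> W \<subseteq> X closure_of N"
    using interior_of_subset[of X "X closure_of N"] by (auto simp: W_def)
  ultimately have "U \<inter> N \<noteq> {}"
    using openin_Int_closure_of_eq_empty[of X "U \<inter> W" N] by blast
  define V where "V = {x \<in> topspace (subtopology X U). f x \<in> - {0}}"
  have "openin (subtopology X U) V"
    unfolding V_def by (rule openin_continuous_map_preimage[OF U(3)]) auto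
  then have "openin X V"
    using \<open>openin X U\<close> openin_trans_full by blast
  moreover have "U \<inter> N \<subseteq> V"
    using assms(3) openin_subset[OF \<open>openin X U\<close>] by (auto simp: V_def)
  ultimately have "(topspace X - N) \<inter> V \<noteq> {}"
    using assms(2) \<open>U \<inter> N \<noteq> {}\<close> by (auto simp: dense_in_def dense_intersects_open)
  moreover have "V \<subseteq> N"
    using assms(3) by (auto simp: V_def)
  ultimately show False
    by blast
qed

lemma uniform_limit_iff_inverse_Suc:
  fixes fs :: "nat \<Rightarrow> 'a \<Rightarrow> real"
  shows "uniform_limit S fs f sequentially \<longleftrightarrow>
    (\<forall>m. \<forall>\<^sub>F k in sequentially. \<forall>x\<in>S. \<bar>fs k x - f x\<bar> \<le> 1 / real (Suc m))"
proof
  assume lim: "uniform_limit S fs f sequentially"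
  show "\<forall>m. \<forall>\<^sub>F k in sequentially. \<forall>x\<in>S. \<bar>fs k x - f x\<bar> \<le> 1 / real (Suc m)"
  proof
    fix m
    have "\<forall>\<^sub>F k in sequentially. \<forall>x\<in>S. dist (fs k x) (f x) < 1 / real (Suc m)"
      by (rule uniform_limitD[OF lim]) simp
    then show "\<forall>\<^sub>F k in sequentially. \<forall>x\<in>S. \<bar>fs k x - f x\<bar> \<le> 1 / real (Suc m)"
      by (rule eventually_mono) (simp add: dist_real_def less_imp_le)
  qed
next
  assume bound: "\<forall>m. \<forall>\<^sub>F k in sequentially. \<forall>x\<in>S. \<bar>fs k x - f x\<bar> \<le> 1 / real (Suc m)"
  show "uniform_limit S fs f sequentially"
  proof (rule uniform_limitI)
    fix e :: real
    assume "0 < e"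
    then obtain m where "1 / real (Suc m) < e"
      by (rule nat_approx_posE)
    moreover have "\<forall>\<^sub>F k in sequentially. \<forall>x\<in>S. \<bar>fs k x - f x\<bar> \<le> 1 / real (Suc m)"
      using bound by blast
    ultimately show "\<forall>\<^sub>F k in sequentially. \<forall>x\<in>S. dist (fs k x) (f x) < e"
      by (auto simp: dist_real_def elim!: eventually_mono)
  qed
qed

lemma uniformly_Cauchy_on_iff_inverse_Suc:
  fixes fs :: "nat \<Rightarrow> 'a \<Rightarrow> real"
  shows "uniformly_Cauchy_on S fs \<longleftrightarrow>
    (\<forall>m. \<exists>M. \<forall>k\<ge>M. \<forall>j\<ge>M. \<forall>x\<in>S. \<bar>fs k x - fs j x\<bar> \<le> 1 / real (Suc m))"
proof
  assume Cauchy: "uniformly_Cauchy_on S fs"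
  show "\<forall>m. \<exists>M. \<forall>k\<ge>M. \<forall>j\<ge>M. \<forall>x\<in>S. \<bar>fs k x - fs j x\<bar> \<le> 1 / real (Suc m)"
  proof
    fix m
    have "(0::real) < 1 / real (Suc m)"
      by simp
    then obtain M where "\<forall>x\<in>S. \<forall>k\<ge>M. \<forall>j\<ge>M. dist (fs k x) (fs j x) < 1 / real (Suc m)"
      using Cauchy unfolding uniformly_Cauchy_on_def by blast
    then show "\<exists>M. \<forall>k\<ge>M. \<forall>j\<ge>M. \<forall>x\<in>S. \<bar>fs k x - fs j x\<bar> \<le> 1 / real (Suc m)"
      unfolding dist_real_def by (meson less_imp_le)
  qed
next
  assume bound: "\<forall>m. \<exists>M. \<forall>k\<ge>M. \<forall>j\<ge>M. \<forall>x\<in>S. \<bar>fs k x - fs j x\<bar> \<le> 1 / real (Suc m)"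
  show "uniformly_Cauchy_on S fs"
  proof (rule uniformly_Cauchy_onI)
    fix e :: real
    assume "0 < e"
    then obtain m where "1 / real (Suc m) < e"
      by (rule nat_approx_posE)
    moreover obtain M where "\<forall>k\<ge>M. \<forall>j\<ge>M. \<forall>x\<in>S. \<bar>fs k x - fs j x\<bar> \<le> 1 / real (Suc m)"
      using bound by blast
    ultimately show "\<exists>M. \<forall>x\<in>S. \<forall>k\<ge>M. \<forall>j\<ge>M. dist (fs k x) (fs j x) < e"
      unfolding dist_real_def by (meson order_le_less_trans)
  qed
qed

definition uniformly_complete :: "('a \<Rightarrow> real) set \<Rightarrow> 'a set \<Rightarrow> bool" where
  "uniformly_complete A S \<longleftrightarrow>
    (\<forall>fs. (\<forall>k. fs k \<in> A) \<longrightarrow> uniformly_Cauchy_on S fs \<longrightarrow> (\<exists>f\<in>A. uniform_limit S fs f sequentially))"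

lemma uniformly_complete_limit:
  assumes "uniformly_complete A S" "\<And>k. fs k \<in> A" "uniform_limit S fs f sequentially"
  obtains g where "g \<in> A" "\<And>x. x \<in> S \<Longrightarrow> g x = f x"
proof -
  have "uniformly_Cauchy_on S fs"
    using assms(3) uniformly_convergent_Cauchy uniformly_convergent_on_def by blast
  then obtain g where "g \<in> A" "uniform_limit S fs g sequentially"
    using assms(1,2) unfolding uniformly_complete_def by blast
  moreover have "g x = f x" if "x \<in> S" for x
    using tendsto_uniform_limitI[OF calculation(2) that] tendsto_uniform_limitI[OF assms(3) that]
    by (rule tendsto_unique[OF trivial_limit_sequentially])
  ultimately show ?thesis
    using that by blast
qed

text \<open>Closure under sqrt makes the nonnegative elements exactly the squares, which is what
  lets a ring isomorphism see the order.\<close>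

locale function_ring =
  fixes A :: "('a \<Rightarrow> real) set" and S :: "'a set"
  assumes vanishes_outside: "f \<in> A \<Longrightarrow> x \<notin> S \<Longrightarrow> f x = 0"
    and indicator_in: "indicator S \<in> A"
    and add_in: "f \<in> A \<Longrightarrow> g \<in> A \<Longrightarrow> (\<lambda>x. f x + g x) \<in> A"
    and mult_in: "f \<in> A \<Longrightarrow> g \<in> A \<Longrightarrow> (\<lambda>x. f x * g x) \<in> A"
    and scale_in: "f \<in> A \<Longrightarrow> (\<lambda>x. c * f x) \<in> A"
    and sqrt_in: "f \<in> A \<Longrightarrow> (\<lambda>x. sqrt (f x)) \<in> A"
begin

lemma diff_in: "f \<in> A \<Longrightarrow> g \<in> A \<Longrightarrow> (\<lambda>x. f x - g x) \<in> A"
  using add_in[of f "\<lambda>x. -1 * g x"] scale_in[of g "-1"] by simp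

lemma indicator_mult: "f \<in> A \<Longrightarrow> (\<lambda>x. indicator S x * f x) = f"
  using vanishes_outside by (auto simp: fun_eq_iff indicator_def)

lemma nonneg_iff_square: "f \<in> A \<Longrightarrow> (\<forall>x. 0 \<le> f x) \<longleftrightarrow> (\<exists>s\<in>A. f = (\<lambda>x. s x * s x))"
  using sqrt_in[of f] by (auto intro!: bexI[of _ "\<lambda>x. sqrt (f x)"])

lemma bounded_iff:
  assumes "f \<in> A" "0 \<le> c"
  shows "(\<forall>x\<in>S. \<bar>f x\<bar> \<le> c) \<longleftrightarrow>
    (\<forall>x. 0 \<le> c * indicator S x - f x) \<and> (\<forall>x. 0 \<le> c * indicator S x + f x)"
  using assms vanishes_outside[OF assms(1)] by (force simp: indicator_def abs_le_iff)

end

locale function_ring_iso =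
  A: function_ring A S + B: function_ring B T
  for A :: "('a \<Rightarrow> real) set" and S and B :: "('b \<Rightarrow> real) set" and T +
  fixes \<phi> :: "('a \<Rightarrow> real) \<Rightarrow> 'b \<Rightarrow> real"
  assumes bij: "bij_betw \<phi> A B"
    and phi_add: "f \<in> A \<Longrightarrow> g \<in> A \<Longrightarrow> \<phi> (\<lambda>x. f x + g x) = (\<lambda>y. \<phi> f y + \<phi> g y)"
    and phi_mult: "f \<in> A \<Longrightarrow> g \<in> A \<Longrightarrow> \<phi> (\<lambda>x. f x * g x) = (\<lambda>y. \<phi> f y * \<phi> g y)"
begin

lemma phi_in: "f \<in> A \<Longrightarrow> \<phi> f \<in> B"
  using bij by (auto simp: bij_betw_def)

lemma phi_surj: "g \<in> B \<Longrightarrow> \<exists>f\<in>A. \<phi> f = g"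
  using bij by (metis bij_betw_imp_surj_on imageE)

lemma phi_inj: "f \<in> A \<Longrightarrow> g \<in> A \<Longrightarrow> \<phi> f = \<phi> g \<Longrightarrow> f = g"
  using bij by (meson bij_betw_imp_inj_on inj_onD)

lemma phi_diff:
  assumes "f \<in> A" "g \<in> A"
  shows "\<phi> (\<lambda>x. f x - g x) = (\<lambda>y. \<phi> f y - \<phi> g y)"
proof -
  have "\<phi> f = \<phi> (\<lambda>x. (f x - g x) + g x)"
    by simp
  also have "\<dots> = (\<lambda>y. \<phi> (\<lambda>x. f x - g x) y + \<phi> g y)"
    using phi_add A.diff_in assms by blast
  finally show ?thesis
    by (auto simp: fun_eq_iff)
qed

lemma phi_indicator: "\<phi> (indicator S) = indicator T"
proof -
  obtain e where e: "e \<in> A" "\<phi> e = indicator T"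
    using phi_surj B.indicator_in by blast
  have "indicator T = (\<lambda>y. \<phi> (indicator S) y * indicator T y)"
    using phi_mult[OF A.indicator_in e(1)] A.indicator_mult[OF e(1)] e(2) by simp
  then show ?thesis
    using B.vanishes_outside[OF phi_in[OF A.indicator_in]]
    by (auto simp: fun_eq_iff indicator_def split: if_splits)
qed

lemma phi_of_nat_mult:
  assumes "f \<in> A"
  shows "\<phi> (\<lambda>x. real n * f x) = (\<lambda>y. real n * \<phi> f y)"
proof (induction n)
  case 0
  show ?case
    using phi_diff[OF assms assms] by simp
next
  case (Suc n)
  have "\<phi> (\<lambda>x. real (Suc n) * f x) = \<phi> (\<lambda>x. real n * f x + f x)"
    by (simp add: algebra_simps)
  also have "\<dots> = (\<lambda>y. real (Suc n) * \<phi> f y)"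
    using phi_add[OF A.scale_in[OF assms] assms] Suc by (simp add: algebra_simps)
  finally show ?case .
qed

lemma phi_inverse_Suc:
  "\<phi> (\<lambda>x. 1 / real (Suc m) * indicator S x) = (\<lambda>y. 1 / real (Suc m) * indicator T y)"
proof -
  define c where "c = 1 / real (Suc m)"
  have "\<phi> (\<lambda>x. real (Suc m) * (c * indicator S x)) = (\<lambda>y. real (Suc m) * \<phi> (\<lambda>x. c * indicator S x) y)"
    by (rule phi_of_nat_mult[OF A.scale_in[OF A.indicator_in]])
  moreover have "(\<lambda>x. real (Suc m) * (c * indicator S x)) = indicator S"
    by (simp add: c_def fun_eq_iff)
  ultimately have "(\<lambda>y. real (Suc m) * \<phi> (\<lambda>x. c * indicator S x) y) = indicator T"
    using phi_indicator by simp
  then show ?thesis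
    unfolding c_def by (auto simp: fun_eq_iff field_simps)
qed

lemma phi_nonneg_iff:
  assumes "f \<in> A"
  shows "(\<forall>y. 0 \<le> \<phi> f y) \<longleftrightarrow> (\<forall>x. 0 \<le> f x)"
proof -
  have "(\<exists>t\<in>B. \<phi> f = (\<lambda>y. t y * t y)) \<longleftrightarrow> (\<exists>s\<in>A. f = (\<lambda>x. s x * s x))"
  proof
    assume "\<exists>t\<in>B. \<phi> f = (\<lambda>y. t y * t y)"
    then obtain s where s: "s \<in> A" "\<phi> f = (\<lambda>y. \<phi> s y * \<phi> s y)"
      using phi_surj by blast
    then have "\<phi> f = \<phi> (\<lambda>x. s x * s x)"
      by (simp add: phi_mult)
    then show "\<exists>s\<in>A. f = (\<lambda>x. s x * s x)"
      using phi_inj assms A.mult_in s(1) by blast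
  next
    assume "\<exists>s\<in>A. f = (\<lambda>x. s x * s x)"
    then show "\<exists>t\<in>B. \<phi> f = (\<lambda>y. t y * t y)"
      using phi_mult phi_in by auto
  qed
  then show ?thesis
    using A.nonneg_iff_square[OF assms] B.nonneg_iff_square[OF phi_in[OF assms]] by simp
qed

lemma phi_bounded_iff:
  assumes "f \<in> A"
  shows "(\<forall>y\<in>T. \<bar>\<phi> f y\<bar> \<le> 1 / real (Suc m)) \<longleftrightarrow> (\<forall>x\<in>S. \<bar>f x\<bar> \<le> 1 / real (Suc m))"
proof -
  let ?c = "\<lambda>x. 1 / real (Suc m) * indicator S x"
  have c: "?c \<in> A"
    by (rule A.scale_in[OF A.indicator_in])
  have "(\<forall>x\<in>S. \<bar>f x\<bar> \<le> 1 / real (Suc m)) \<longleftrightarrow> (\<forall>x. 0 \<le> ?c x - f x) \<and> (\<forall>x. 0 \<le> ?c x + f x)"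
    by (rule A.bounded_iff[OF assms]) simp
  also have "\<dots> \<longleftrightarrow> (\<forall>y. 0 \<le> \<phi> (\<lambda>x. ?c x - f x) y) \<and> (\<forall>y. 0 \<le> \<phi> (\<lambda>x. ?c x + f x) y)"
    using phi_nonneg_iff[OF A.diff_in[OF c assms]] phi_nonneg_iff[OF A.add_in[OF c assms]]
    by (simp only:)
  also have "\<dots> \<longleftrightarrow> (\<forall>y. 0 \<le> 1 / real (Suc m) * indicator T y - \<phi> f y) \<and>
      (\<forall>y. 0 \<le> 1 / real (Suc m) * indicator T y + \<phi> f y)"
    unfolding phi_diff[OF c assms] phi_add[OF c assms] phi_inverse_Suc ..
  also have "\<dots> \<longleftrightarrow> (\<forall>y\<in>T. \<bar>\<phi> f y\<bar> \<le> 1 / real (Suc m))"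
    by (rule B.bounded_iff[OF phi_in[OF assms], symmetric]) simp
  finally show ?thesis ..
qed

lemma phi_uniform_limit_iff:
  assumes "\<And>k. fs k \<in> A" "f \<in> A"
  shows "uniform_limit T (\<lambda>k. \<phi> (fs k)) (\<phi> f) sequentially \<longleftrightarrow> uniform_limit S fs f sequentially"
proof -
  have "(\<forall>y\<in>T. \<bar>\<phi> (fs k) y - \<phi> f y\<bar> \<le> 1 / real (Suc m)) \<longleftrightarrow> (\<forall>x\<in>S. \<bar>fs k x - f x\<bar> \<le> 1 / real (Suc m))"
    for k m
    using phi_bounded_iff[OF A.diff_in[OF assms(1)[of k] assms(2)], of m]
    unfolding phi_diff[OF assms(1)[of k] assms(2)] .
  then show ?thesis
    by (simp add: uniform_limit_iff_inverse_Suc)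
qed

lemma phi_uniformly_Cauchy_on_iff:
  assumes "\<And>k. fs k \<in> A"
  shows "uniformly_Cauchy_on T (\<lambda>k. \<phi> (fs k)) \<longleftrightarrow> uniformly_Cauchy_on S fs"
proof -
  have "(\<forall>y\<in>T. \<bar>\<phi> (fs k) y - \<phi> (fs j) y\<bar> \<le> 1 / real (Suc m)) \<longleftrightarrow> (\<forall>x\<in>S. \<bar>fs k x - fs j x\<bar> \<le> 1 / real (Suc m))"
    for k j m
    using phi_bounded_iff[OF A.diff_in[OF assms[of k] assms[of j]], of m]
    unfolding phi_diff[OF assms[of k] assms[of j]] .
  then show ?thesis
    by (simp add: uniformly_Cauchy_on_iff_inverse_Suc)
qed

lemma uniformly_complete_transfer:
  assumes "uniformly_complete B T"
  shows "uniformly_complete A S"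
  unfolding uniformly_complete_def
proof (intro allI impI)
  fix fs
  assume fs: "\<forall>k. fs k \<in> A" and "uniformly_Cauchy_on S fs"
  then have "uniformly_Cauchy_on T (\<lambda>k. \<phi> (fs k))"
    using phi_uniformly_Cauchy_on_iff[OF fs[rule_format]] by simp
  moreover have "\<forall>k. \<phi> (fs k) \<in> B"
    using fs by (simp add: phi_in)
  ultimately obtain g where "g \<in> B" "uniform_limit T (\<lambda>k. \<phi> (fs k)) g sequentially"
    using assms unfolding uniformly_complete_def by auto
  moreover obtain f where "f \<in> A" "\<phi> f = g"
    using phi_surj \<open>g \<in> B\<close> by blast
  ultimately show "\<exists>f\<in>A. uniform_limit S fs f sequentially"
    using phi_uniform_limit_iff[OF fs[rule_format] \<open>f \<in> A\<close>] by auto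
qed

end

lemma ring_isomorphic_uniformly_complete:
  assumes "ring_isomorphic A B" "function_ring A S" "function_ring B T" "uniformly_complete B T"
  shows "uniformly_complete A S"
proof -
  obtain \<phi> where "function_ring_iso A S B T \<phi>"
    using assms(1-3) unfolding ring_isomorphic_def function_ring_iso_def function_ring_iso_axioms_def
    by blast
  then show ?thesis
    using assms(4) function_ring_iso.uniformly_complete_transfer by blast
qed

lemma function_ring_C_ring: "function_ring (C_ring Y) (topspace Y)"
proof
  have "continuous_map Y euclideanreal (indicator (topspace Y))"
    by (rule continuous_map_eq[of _ _ "\<lambda>x. 1"]) (auto simp: indicator_def)
  then show "indicator (topspace Y) \<in> C_ring Y"
    by (simp add: C_ring_def)
qed (auto simp: C_ring_def intro!: continuous_intros)

lemma uniformly_complete_C_ring: "uniformly_complete (C_ring Y) (topspace Y)"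
  unfolding uniformly_complete_def
proof (intro allI impI)
  fix gs
  assume gs: "\<forall>k. gs k \<in> C_ring Y" and "uniformly_Cauchy_on (topspace Y) gs"
  then obtain l where l: "uniform_limit (topspace Y) gs l sequentially"
    using Cauchy_uniformly_convergent uniformly_convergent_on_def by blast
  have "continuous_map Y euclideanreal l"
    using Met_TC.continuous_map_uniform_limit_alt[where F=sequentially and X=Y and f=gs and g=l] gs l
    by (simp add: C_ring_def uniform_limit_iff)
  define g where "g y = (if y \<in> topspace Y then l y else 0)" for y
  have "g \<in> C_ring Y"
    using continuous_map_eq[OF \<open>continuous_map Y euclideanreal l\<close>, of g]
    by (auto simp: C_ring_def g_def)
  moreover have "uniform_limit (topspace Y) gs g sequentially"
    using l by (rule uniform_limit_cong[THEN iffD1, rotated -1]) (auto simp: g_def)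
  ultimately show "\<exists>g\<in>C_ring Y. uniform_limit (topspace Y) gs g sequentially"
    by blast
qed

lemma function_ring_T2_ring: "function_ring (T2_ring X) (topspace X)"
proof
  have "in_T2 X (indicator (topspace X))"
    by (rule in_T2_cong[OF in_T2_continuous_map[of X "\<lambda>x. 1"]]) auto
  then show "indicator (topspace X) \<in> T2_ring X"
    by (simp add: T2_ring_def)
next
  fix f g
  assume "f \<in> T2_ring X" "g \<in> T2_ring X"
  then have "in_T2 X f" "in_T2 X g"
    by (simp_all add: T2_ring_def)
  have "in_T2 X (\<lambda>x. f x + g x)"
    by (rule in_T2_compose2[OF \<open>in_T2 X f\<close> \<open>in_T2 X g\<close>]) (intro continuous_intros)
  moreover have "in_T2 X (\<lambda>x. f x * g x)"
    by (rule in_T2_compose2[OF \<open>in_T2 X f\<close> \<open>in_T2 X g\<close>]) (intro continuous_intros)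
  ultimately show "(\<lambda>x. f x + g x) \<in> T2_ring X" "(\<lambda>x. f x * g x) \<in> T2_ring X"
    using \<open>f \<in> T2_ring X\<close> \<open>g \<in> T2_ring X\<close> by (simp_all add: T2_ring_def)
next
  fix f c
  assume f: "f \<in> T2_ring X"
  then have "in_T2 X f"
    by (simp add: T2_ring_def)
  have "in_T2 X (\<lambda>x. c * f x)"
    by (rule in_T2_compose[OF \<open>in_T2 X f\<close>]) (intro continuous_intros)
  then show "(\<lambda>x. c * f x) \<in> T2_ring X"
    using f by (simp add: T2_ring_def)
  have "in_T2 X (\<lambda>x. sqrt (f x))"
    by (rule in_T2_compose[OF \<open>in_T2 X f\<close>]) (intro continuous_intros)
  then show "(\<lambda>x. sqrt (f x)) \<in> T2_ring X"
    using f by (simp add: T2_ring_def)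
next
  show "f x = 0" if "f \<in> T2_ring X" "x \<notin> topspace X" for f x
    using that by (simp add: T2_ring_def)
qed

lemma finite_to_nat_on_less:
  assumes "countable N"
  shows "finite {x \<in> N. to_nat_on N x < k}"
proof (rule finite_imageD)
  show "finite (to_nat_on N ` {x \<in> N. to_nat_on N x < k})"
    by (rule finite_subset[of _ "{..<k}"]) auto
  show "inj_on (to_nat_on N) {x \<in> N. to_nat_on N x < k}"
    using inj_on_to_nat_on[OF assms] by (rule inj_on_subset) auto
qed

lemma uniform_limit_truncations:
  fixes f :: "'a \<Rightarrow> real" and r :: "'a \<Rightarrow> nat"
  assumes "\<And>x. \<bar>f x\<bar> \<le> 1 / real (Suc (r x))"
  shows "uniform_limit S (\<lambda>k x. if r x < k then f x else 0) f sequentially"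
  unfolding uniform_limit_iff_inverse_Suc
proof
  fix m
  show "\<forall>\<^sub>F k in sequentially. \<forall>x\<in>S. \<bar>(if r x < k then f x else 0) - f x\<bar> \<le> 1 / real (Suc m)"
  proof (rule eventually_sequentiallyI[of m], intro ballI)
    fix k x
    assume "m \<le> k"
    show "\<bar>(if r x < k then f x else 0) - f x\<bar> \<le> 1 / real (Suc m)"
    proof (cases "r x < k")
      case False
      then have "1 / real (Suc (r x)) \<le> 1 / real (Suc m)"
        using \<open>m \<le> k\<close> by (simp add: frac_le)
      then show ?thesis
        using assms[of x] False by simp
    qed simp
  qed
qed

lemma in_T2_truncation:
  assumes "countable N" "dense_in X (topspace X - N)" "\<And>x. x \<in> N \<Longrightarrow> is_zero_set X {x}"
    and "\<And>x. x \<notin> N \<Longrightarrow> f x = 0"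
  shows "in_T2 X (\<lambda>x. if to_nat_on N x < k then f x else 0)"
proof (rule in_T2_if_vanishes_off_finite)
  show "finite {x \<in> N. to_nat_on N x < k}"
    using assms(1) by (rule finite_to_nat_on_less)
  show "dense_in X (topspace X - {x \<in> N. to_nat_on N x < k})"
    using assms(2) by (rule dense_in_mono) auto
qed (use assms(3,4) in auto)

lemma T2_ring_not_uniformly_complete:
  assumes "\<And>k. fs k \<in> T2_ring X" "uniform_limit (topspace X) fs f sequentially" "\<not> in_T2 X f"
  shows "\<not> uniformly_complete (T2_ring X) (topspace X)"
proof
  assume complete: "uniformly_complete (T2_ring X) (topspace X)"
  obtain g where "g \<in> T2_ring X" "\<And>x. x \<in> topspace X \<Longrightarrow> g x = f x"
    using uniformly_complete_limit[OF complete assms(1,2)] by blast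
  then show False
    using assms(3) in_T2_cong by (auto simp: T2_ring_def)
qed

theorem theorem2p4:
  fixes X :: "'a topology" and N :: "'a set"
  assumes "tychonoff_space X"
    and "N \<subseteq> topspace X" and "countable N" and "infinite N"
    and "\<not> nowhere_dense_in X N"
    and "dense_in X (topspace X - N)"
    and "\<forall>n\<in>N. is_zero_set X {n}"
  shows "(\<exists>fs :: nat \<Rightarrow> 'a \<Rightarrow> real. \<exists>f. (\<forall>k. in_T2 X (fs k)) \<and>
            uniform_limit (topspace X) fs f sequentially \<and> \<not> in_T2 X f)
       \<and> (\<forall>Y :: 'b topology. \<not> ring_isomorphic (T2_ring X) (C_ring Y))"
proof -
  define f where "f x = (if x \<in> N then 1 / real (Suc (to_nat_on N x)) else 0)" for x
  define fs where "fs k x = (if to_nat_on N x < k then f x else 0)" for k x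
  have fs_T2: "in_T2 X (fs k)" for k
    unfolding fs_def using assms(3,6,7) by (intro in_T2_truncation) (auto simp: f_def)
  have lim: "uniform_limit (topspace X) fs f sequentially"
    unfolding fs_def[abs_def] by (rule uniform_limit_truncations) (simp add: f_def)
  have f_not_T2: "\<not> in_T2 X f"
    using assms(5,6) by (rule not_in_T2_if_nonzero_exactly_on) (auto simp: f_def)
  have "fs k \<in> T2_ring X" for k
    using fs_T2 assms(2) by (auto simp: T2_ring_def fs_def f_def)
  then have "\<not> uniformly_complete (T2_ring X) (topspace X)"
    using lim f_not_T2 by (rule T2_ring_not_uniformly_complete)
  then have "\<not> ring_isomorphic (T2_ring X) (C_ring Y)" for Y :: "'b topology"
    using ring_isomorphic_uniformly_complete function_ring_T2_ring function_ring_C_ring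
      uniformly_complete_C_ring by blast
  then show ?thesis
    using fs_T2 lim f_not_T2 by blast
qed

end
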